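(* Let $d$ be a positive integer, let $0 \le \kappa < d$ be a real number and let $K>0$. Let $N$ be a positive integer and let $S \subseteq [N]^d=\{1,\ldots,N\}^d$ be a set which, for every prime $p$, occupies at most $K p^{\kappa}$ residue classes modulo $p$ (i.e. the image of $S$ in $(\mathbb{Z}/p\mathbb{Z})^d$ has at most $K p^{\kappa}$ elements). Then for every $\varepsilon>0$ there exists a nonzero polynomial $P \in \mathbb{Z}[x_1,\ldots,x_d]$ of complexity at most $C(\log N)^{\frac{\kappa}{d-\kappa}}$ vanishing on at least $(1-\varepsilon)|S|$ points of $S$, where $C$ is a constant depending only on $\kappa, d, \varepsilon$ (and the implied constant $K$), and not on $N$ or $S$.
   Context: A nonzero polynomial in $\mathbb{Z}[x_1,\ldots,x_d]$ is said to have complexity at most $C$ if it has degree at most $C$ and all its coefficients are bounded in absolute value by $N^{C}$. Here $N$ is a parameter tending to infinity; asymptotic statements and constants are uniform in $N$. *)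

theory Defs
  imports Complex_Main "HOL-Computational_Algebra.Primes"
begin

text \<open>Points of Z^d are functions nat => int, zero outside {0..<d}.
 Multivariate integer polynomials in d variables are coefficient functions
 on exponent vectors alpha :: nat => nat (zero outside {0..<d}).\<close>

definition grid :: "nat \<Rightarrow> nat \<Rightarrow> (nat \<Rightarrow> int) set" where
  "grid d N = {x. (\<forall>i<d. 1 \<le> x i \<and> x i \<le> int N) \<and> (\<forall>i. d \<le> i \<longrightarrow> x i = 0)}"

definition reduce_mod :: "nat \<Rightarrow> (nat \<Rightarrow> int) \<Rightarrow> (nat \<Rightarrow> int)" where
  "reduce_mod p x = (\<lambda>i. x i mod int p)"

definition mono_vecs :: "nat \<Rightarrow> real \<Rightarrow> (nat \<Rightarrow> nat) set" where
  "mono_vecs d A = {\<alpha>. (\<forall>i. d \<le> i \<longrightarrow> \<alpha> i = 0) \<and> real (sum \<alpha> {..<d}) \<le> A}"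

definition mpoly_eval :: "nat \<Rightarrow> real \<Rightarrow> ((nat \<Rightarrow> nat) \<Rightarrow> int) \<Rightarrow> (nat \<Rightarrow> int) \<Rightarrow> int" where
  "mpoly_eval d A c x = (\<Sum>\<alpha>\<in>mono_vecs d A. c \<alpha> * (\<Prod>i<d. x i ^ \<alpha> i))"

definition nonzero_poly_complexity :: "nat \<Rightarrow> nat \<Rightarrow> real \<Rightarrow> ((nat \<Rightarrow> nat) \<Rightarrow> int) \<Rightarrow> bool" where
  "nonzero_poly_complexity d N A c \<longleftrightarrow>
     (\<forall>\<alpha>. \<alpha> \<notin> mono_vecs d A \<longrightarrow> c \<alpha> = 0) \<and>
     (\<forall>\<alpha>. real_of_int \<bar>c \<alpha>\<bar> \<le> real N powr A) \<and>
     (\<exists>\<alpha>. c \<alpha> \<noteq> 0)"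

end

theory Submission
  imports
    Defs
    "HOL-Library.FuncSet"
    "HOL-Number_Theory.Cong"
    "HOL-Analysis.Harmonic_Numbers"
    "HOL-Real_Asymp.Real_Asymp"
begin

text \<open>Siegel's lemma modulo the primes \<open>p \<le> Q\<close>. A polynomial of degree at most \<open>A\<close> has about
  \<open>(A/d)\<^sup>d\<close> coefficients, while modulo \<open>p\<close> its values on \<open>S\<close> depend only on the at most \<open>K p\<^sup>\<kappa>\<close>
  residue classes occupied by \<open>S\<close>. Hence, once \<open>(A/d)\<^sup>d A log N\<close> exceeds \<open>K Q\<^sup>\<kappa> \<theta>(Q)\<close> (with
  \<open>\<theta>(Q)\<close> the logarithm of the primorial of \<open>Q\<close>), two polynomials with coefficients in \<open>[0, N\<^sup>A]\<close>
  agree modulo every \<open>p \<le> Q\<close> on \<open>S\<close>. Their difference is divisible by the primorial at each point of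
  \<open>S\<close> but smaller than it in absolute value once \<open>\<theta>(Q)\<close> slightly exceeds \<open>A log N\<close>, so it vanishes
  on all of \<open>S\<close>. Chebyshev's bound \<open>\<theta>(Q) \<ge> Q/2 - O(1)\<close>
  allows \<open>Q = O(A log N)\<close>, and the balance then holds for \<open>A\<close> a large multiple of
  \<open>(log N)\<^sup>\<kappa>\<^sup>/\<^sup>(\<^sup>d\<^sup>-\<^sup>\<kappa>\<^sup>)\<close>.\<close>

section \<open>Chebyshev's lower bound for the primorial\<close>

lemma multiplicity_eq_card_prime_power_dvd:
  assumes p: "prime (p::nat)" and x: "0 < x" "x < p ^ K"
  shows "multiplicity p x = card {k \<in> {1..K}. p ^ k dvd x}"
proof -
  have "p ^ multiplicity p x \<le> x"
    using x by (intro dvd_imp_le multiplicity_dvd)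
  hence "multiplicity p x < K"
    using p x power_less_imp_less_exp[of p] by (meson le_less_trans prime_gt_1_nat)
  moreover have iff: "p ^ k dvd x \<longleftrightarrow> k \<le> multiplicity p x" for k
    using p x by (intro power_dvd_iff_le_multiplicity) auto
  ultimately have "{k \<in> {1..K}. p ^ k dvd x} = {1..multiplicity p x}"
    by (auto simp: iff)
  thus ?thesis by simp
qed

text \<open>Legendre's formula, with the sum truncated at an exponent \<open>K\<close> beyond which all terms vanish.\<close>
lemma multiplicity_fact:
  assumes p: "prime (p::nat)"
  shows "m < p ^ K \<Longrightarrow> multiplicity p (fact m :: nat) = (\<Sum>k=1..K. m div p ^ k)"
proof (induction m)
  case 0
  then show ?case by simp
next
  case (Suc m)
  have "multiplicity p (fact (Suc m) :: nat) = multiplicity p (Suc m * fact m)"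
    by (simp add: fact_Suc)
  also have "\<dots> = multiplicity p (Suc m) + multiplicity p (fact m :: nat)"
    using p by (intro prime_elem_multiplicity_mult_distrib) auto
  also have "multiplicity p (Suc m) = card {k \<in> {1..K}. p ^ k dvd Suc m}"
    using multiplicity_eq_card_prime_power_dvd[OF p, of "Suc m" K] Suc.prems by simp
  also have "\<dots> = (\<Sum>k=1..K. if p ^ k dvd Suc m then 1 else 0)"
    by (simp add: sum.If_cases Int_def conj_commute)
  also have "multiplicity p (fact m :: nat) = (\<Sum>k=1..K. m div p ^ k)"
    using Suc by simp
  also have "(\<Sum>k=1..K. if p ^ k dvd Suc m then 1 else 0) + \<dots> = (\<Sum>k=1..K. Suc m div p ^ k)"
    using p by (auto simp: sum.distrib[symmetric] div_Suc dvd_eq_mod_eq_0 prime_gt_0_nat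
                     intro!: sum.cong)
  finally show ?case .
qed

lemma div_double_bounds:
  fixes n q :: nat
  assumes "q > 0"
  shows "2 * (n div q) \<le> 2 * n div q" and "2 * n div q \<le> 2 * (n div q) + 1"
proof -
  have "2 * n = 2 * (n div q) * q + 2 * (n mod q)"
    by (metis div_mult_mod_eq distrib_left mult.assoc)
  hence "2 * n div q = 2 * (n div q) + 2 * (n mod q) div q"
    using assms by simp
  moreover have "2 * (n mod q) div q < 2"
    using assms by (intro less_mult_imp_div_less) simp
  ultimately show "2 * (n div q) \<le> 2 * n div q" and "2 * n div q \<le> 2 * (n div q) + 1"
    by linarith+
qed

text \<open>Each Legendre term \<open>\<lfloor>2n/p\<^sup>k\<rfloor> - 2\<lfloor>n/p\<^sup>k\<rfloor>\<close> is \<open>0\<close> or \<open>1\<close>, and it is \<open>0\<close> once \<open>p\<^sup>k > 2n\<close>.\<close>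
lemma prime_power_multiplicity_central_binomial_le:
  assumes p: "prime (p::nat)" and n: "n > 0"
  shows "p ^ multiplicity p ((2 * n) choose n) \<le> 2 * n"
proof (rule ccontr)
  define r where "r = multiplicity p ((2 * n) choose n)"
  define K where "K = 2 * n"
  assume "\<not> p ^ multiplicity p ((2 * n) choose n) \<le> 2 * n"
  hence big: "2 * n < p ^ r" by (simp add: r_def)
  have p2: "p \<ge> 2" using p prime_ge_2_nat by blast
  have "2 * n < 2 ^ (2 * n)" by (rule less_exp)
  also have "(2::nat) ^ (2 * n) \<le> p ^ K" using p2 by (simp add: K_def power_mono)
  finally have nK: "2 * n < p ^ K" .
  have "fact (2 * n) = (fact n * fact n * ((2 * n) choose n) :: nat)"
    using binomial_fact_lemma[of n "2 * n"] by (simp add: mult_2 algebra_simps)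
  hence "multiplicity p (fact (2 * n) :: nat) = 2 * multiplicity p (fact n :: nat) + r"
    using p by (simp add: prime_elem_multiplicity_mult_distrib r_def)
  hence "(\<Sum>k=1..K. 2 * n div p ^ k) = (\<Sum>k=1..K. 2 * (n div p ^ k)) + r"
    using multiplicity_fact[OF p nK] multiplicity_fact[OF p, of n K] nK
    by (simp add: sum_distrib_left)
  hence "r = (\<Sum>k=1..K. 2 * n div p ^ k - 2 * (n div p ^ k))"
    using div_double_bounds(1) p2 by (simp add: sum_subtractf_nat)
  also have "\<dots> \<le> (\<Sum>k=1..K. if k < r then 1 else 0)"
  proof (rule sum_mono)
    fix k
    show "2 * n div p ^ k - 2 * (n div p ^ k) \<le> (if k < r then 1 else 0)"
    proof (cases "k < r")
      case False
      hence "p ^ r \<le> p ^ k" using p2 by (simp add: power_increasing)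
      thus ?thesis using big by simp
    qed (use div_double_bounds(2)[of "p ^ k" n] p2 in simp)
  qed
  also have "\<dots> = card {k \<in> {1..K}. k < r}"
    by (simp add: sum.If_cases Int_def conj_commute)
  also have "\<dots> \<le> card {1..<r}" by (intro card_mono) auto
  finally have "r \<le> r - 1" by simp
  moreover have "r \<ge> 1" using big n by (cases r) auto
  ultimately show False by linarith
qed

lemma prime_power_multiplicity_central_binomial_le_prime:
  assumes p: "prime (p::nat)" and n: "n > 0" and large: "2 * n < p ^ 2"
  shows "p ^ multiplicity p ((2 * n) choose n) \<le> p"
proof -
  have p1: "p > 1" using p by (rule prime_gt_1_nat)
  have "p ^ multiplicity p ((2 * n) choose n) < p ^ 2"
    using prime_power_multiplicity_central_binomial_le[OF p n] large by linarith
  hence "multiplicity p ((2 * n) choose n) \<le> 1"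
    using p1 power_less_imp_less_exp by fastforce
  thus ?thesis using p1 by (metis power_increasing power_one_right less_imp_le_nat)
qed

lemma prime_factors_central_binomial_le:
  assumes "p \<in> prime_factors ((2 * n) choose n)"
  shows "p \<le> 2 * n"
proof -
  have p: "prime p" "p dvd (2 * n) choose n" using assms by auto
  have "fact (2 * n) = (fact n * fact n * ((2 * n) choose n) :: nat)"
    using binomial_fact_lemma[of n "2 * n"] by (simp add: mult_2 algebra_simps)
  hence "p dvd fact (2 * n)" using p(2) by (metis dvd_mult_right dvd_trans dvd_triv_right)
  thus ?thesis using prime_dvd_fact_iff[OF p(1)] by simp
qed

definition primorial :: "nat \<Rightarrow> nat" where
  "primorial q = \<Prod>{p. prime p \<and> p \<le> q}"

lemma finite_primes_le: "finite {p::nat. prime p \<and> p \<le> q}"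
  by (rule finite_subset[of _ "{..q}"]) auto

lemma primorial_pos: "primorial q > 0"
  unfolding primorial_def using finite_primes_le by (intro prod_pos) (auto simp: prime_gt_0_nat)

lemma primorial_mono: "a \<le> b \<Longrightarrow> primorial a \<le> primorial b"
  unfolding primorial_def
  by (intro dvd_imp_le prod_dvd_prod_subset finite_primes_le)
     (use primorial_pos[of b] in \<open>auto simp: primorial_def\<close>)

lemma primorial_Suc_le: "primorial (Suc m) \<le> Suc m * primorial m"
proof (cases "prime (Suc m)")
  case True
  hence "{p. prime p \<and> p \<le> Suc m} = insert (Suc m) {p. prime p \<and> p \<le> m}" by auto
  thus ?thesis using finite_primes_le[of m] by (simp add: primorial_def)
next
  case False
  hence "{p. prime p \<and> p \<le> Suc m} = {p. prime p \<and> p \<le> m}" using le_Suc_eq by auto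
  thus ?thesis by (simp add: primorial_def)
qed

lemma ln_primorial: "ln (real (primorial q)) = (\<Sum>p | prime p \<and> p \<le> q. ln (real p))"
  unfolding primorial_def using finite_primes_le[of q]
  by (simp, subst ln_prod) (auto simp: prime_gt_0_nat)

lemma central_binomial_le_primorial:
  assumes n: "n > 0"
  shows "(2 * n) choose n \<le> (2 * n) ^ nat \<lfloor>sqrt (real (2 * n))\<rfloor> * primorial (2 * n)"
proof -
  define B where "B = (2 * n) choose n"
  define s where "s = nat \<lfloor>sqrt (real (2 * n))\<rfloor>"
  define F where "F = prime_factors B"
  define F1 where "F1 = F \<inter> {p. p * p \<le> 2 * n}"
  have "B = (\<Prod>p\<in>F. p ^ multiplicity p B)"
    unfolding F_def by (rule prime_factorization_nat) (simp add: B_def)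
  also have "\<dots> \<le> (\<Prod>p\<in>F. if p * p \<le> 2 * n then 2 * n else p)"
  proof (rule prod_mono)
    fix p assume "p \<in> F"
    hence p: "prime p" by (simp add: F_def in_prime_factors_imp_prime)
    show "0 \<le> p ^ multiplicity p B \<and> p ^ multiplicity p B \<le> (if p * p \<le> 2 * n then 2 * n else p)"
      using prime_power_multiplicity_central_binomial_le[OF p n]
        prime_power_multiplicity_central_binomial_le_prime[OF p n]
      by (simp add: B_def power2_eq_square)
  qed
  also have "\<dots> = (2 * n) ^ card F1 * \<Prod>(F \<inter> - {p. p * p \<le> 2 * n})"
    by (subst prod.If_cases) (simp_all add: F1_def F_def)
  also have "(2 * n) ^ card F1 \<le> (2 * n) ^ s"
  proof -
    have "F1 \<subseteq> {1..s}"
    proof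
      fix p assume "p \<in> F1"
      hence p: "prime p" "p * p \<le> 2 * n"
        by (auto simp: F1_def F_def in_prime_factors_imp_prime)
      have "real p \<le> sqrt (real (2 * n))"
        using p(2) by (intro real_le_rsqrt) (simp add: power2_eq_square flip: of_nat_mult)
      thus "p \<in> {1..s}" using prime_ge_1_nat[OF p(1)] unfolding s_def by simp linarith
    qed
    hence "card F1 \<le> s" using card_mono[of "{1..s}" F1] by simp
    thus ?thesis using n by (intro power_increasing) auto
  qed
  also have "\<Prod>(F \<inter> - {p. p * p \<le> 2 * n}) \<le> primorial (2 * n)"
    unfolding primorial_def using prime_factors_central_binomial_le primorial_pos[of "2 * n"]
    by (intro dvd_imp_le prod_dvd_prod_subset finite_primes_le)
       (auto simp: primorial_def F_def B_def)
  finally show ?thesis unfolding B_def s_def by (simp add: mult_mono)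
qed

lemma ln_primorial_double_ge:
  assumes n: "n > 0"
  shows "2 * real n * ln 2 - ln (2 * real n) - sqrt (2 * real n) * ln (2 * real n)
           \<le> ln (real (primorial (2 * n)))"
proof -
  define s where "s = nat \<lfloor>sqrt (real (2 * n))\<rfloor>"
  define B where "B = real ((2 * n) choose n)"
  have "ln (4::real) = 2 * ln 2"
    using ln_realpow[of 2 2] by simp
  hence "2 * real n * ln 2 - ln (2 * real n) = ln (4 ^ n / (2 * real n))"
    using n by (simp add: ln_div ln_realpow)
  also have "\<dots> \<le> ln B"
    unfolding B_def using n central_binomial_lower_bound[OF n] by (intro ln_mono) auto
  also have "B \<le> real ((2 * n) ^ s * primorial (2 * n))"
    unfolding B_def s_def using central_binomial_le_primorial[OF n] by (simp only: of_nat_le_iff)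
  hence "ln B \<le> real s * ln (2 * real n) + ln (real (primorial (2 * n)))"
    using n primorial_pos[of "2 * n"]
    by (subst (asm) ln_le_cancel_iff[symmetric]) (auto simp: B_def ln_mult ln_realpow algebra_simps)
  also have "real s * ln (2 * real n) \<le> sqrt (2 * real n) * ln (2 * real n)"
    using n by (intro mult_right_mono) (auto simp: s_def)
  finally show ?thesis by linarith
qed

lemma ln_primorial_ge_linear: "\<exists>c \<ge> 0. \<forall>q. real q / 2 - c \<le> ln (real (primorial q))"
proof -
  \<comment> \<open>\<open>ln 2\<close> is replaced by \<open>2/3\<close>, which \<open>real_asymp\<close> can compare with \<open>1/2\<close>.\<close>
  have "eventually (\<lambda>x::real. x \<le> 2 * x * (2/3) - ln (2 * x) - sqrt (2 * x) * ln (2 * x)) at_top"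
    by real_asymp
  then obtain X where X: "\<And>x. x \<ge> X \<Longrightarrow> x \<le> 2 * x * (2/3) - ln (2 * x) - sqrt (2 * x) * ln (2 * x)"
    by (auto simp: eventually_at_top_linorder)
  define n0 where "n0 = max 1 (nat \<lceil>X\<rceil>)"
  have double: "real n - real n0 \<le> ln (real (primorial (2 * n)))" for n
  proof (cases "n \<ge> n0")
    case True
    hence "n > 0" "real n \<ge> X" unfolding n0_def by linarith+
    moreover have "2 * real n * (2/3) \<le> 2 * real n * ln 2"
      using ln2_ge_two_thirds by (intro mult_left_mono) auto
    ultimately show ?thesis using ln_primorial_double_ge[of n] X[of "real n"] by linarith
  next
    case False
    have "0 \<le> ln (real (primorial (2 * n)))" using primorial_pos[of "2 * n"] by simp
    thus ?thesis using False by linarith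
  qed
  have "real q / 2 - (real n0 + 1/2) \<le> ln (real (primorial q))" for q
  proof -
    have "ln (real (primorial (2 * (q div 2)))) \<le> ln (real (primorial q))"
      using primorial_pos primorial_mono[of "2 * (q div 2)" q] by (intro ln_mono) auto
    moreover have "real q / 2 - 1/2 \<le> real (q div 2)" by linarith
    ultimately show ?thesis using double[of "q div 2"] by linarith
  qed
  thus ?thesis by (intro exI[of _ "real n0 + 1/2"]) auto
qed

text \<open>Minimality of \<open>Q\<close> gives the upper bound: the last prime factor added is at most \<open>Q\<close>.\<close>
lemma primorial_threshold:
  fixes \<gamma> T :: real
  assumes cheb: "\<And>q. real q / 2 - \<gamma> \<le> ln (real (primorial q))" and \<gamma>: "\<gamma> \<ge> 0" and T: "T > 0"
  obtains Q where "T \<le> ln (real (primorial Q))" "ln (real (primorial Q)) < T + ln (real Q)"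
    "real Q \<le> 2 * (T + \<gamma>) + 1" "Q > 0"
proof -
  define q0 where "q0 = nat \<lceil>2 * (T + \<gamma>)\<rceil>"
  have "2 * (T + \<gamma>) \<le> real q0"
    unfolding q0_def by (rule of_nat_ceiling)
  hence q0: "T \<le> ln (real (primorial q0))"
    using cheb[of q0] by (simp add: field_simps)
  define Q where "Q = (LEAST q. T \<le> ln (real (primorial q)))"
  have QT: "T \<le> ln (real (primorial Q))" unfolding Q_def by (rule LeastI[of _ q0]) (rule q0)
  have "Q \<le> q0" unfolding Q_def by (rule Least_le) (rule q0)
  moreover have "real q0 = real_of_int \<lceil>2 * (T + \<gamma>)\<rceil>"
    unfolding q0_def using \<gamma> T by simp
  ultimately have Q_le: "real Q \<le> 2 * (T + \<gamma>) + 1"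
    using of_int_ceiling_le_add_one[of "2 * (T + \<gamma>)"] by linarith
  have "Q \<noteq> 0"
  proof
    assume "Q = 0"
    moreover have "{p::nat. prime p \<and> p \<le> 0} = {}" by auto
    ultimately have "primorial Q = 1" unfolding primorial_def by (metis prod.empty)
    thus False using QT T by simp
  qed
  then obtain m where m: "Q = Suc m" by (cases Q) auto
  have "real (primorial Q) \<le> real Q * real (primorial m)"
    using primorial_Suc_le[of m] m by (simp only: of_nat_le_iff flip: of_nat_mult)
  hence "ln (real (primorial Q)) \<le> ln (real Q * real (primorial m))"
    using primorial_pos[of Q] by (intro ln_mono) auto
  also have "\<dots> = ln (real Q) + ln (real (primorial m))"
    using primorial_pos[of m] m by (simp add: ln_mult del: of_nat_Suc)
  also have "ln (real (primorial m)) < T"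
    using not_less_Least[of m "\<lambda>q. T \<le> ln (real (primorial q))"] m unfolding Q_def by simp
  finally show ?thesis using that QT Q_le m by fastforce
qed

lemma primorial_threshold_linear:
  fixes \<gamma> T b X :: real
  assumes cheb: "\<And>q. real q / 2 - \<gamma> \<le> ln (real (primorial q))" and \<gamma>: "\<gamma> \<ge> 0"
    and T: "0 < T" "T \<le> b * X" and X: "1 / 2 \<le> X"
  obtains Q where "T \<le> ln (real (primorial Q))" "real Q \<le> (2 * b + 4 * \<gamma> + 2) * X"
    "ln (real (primorial Q)) \<le> (3 * b + 4 * \<gamma> + 2) * X"
proof -
  obtain Q where Q: "T \<le> ln (real (primorial Q))" "ln (real (primorial Q)) < T + ln (real Q)"
      "real Q \<le> 2 * (T + \<gamma>) + 1" "Q > 0"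
    using primorial_threshold[OF cheb \<gamma> T(1)] by blast
  have Q_le: "real Q \<le> (2 * b + 4 * \<gamma> + 2) * X"
    using Q(3) T(2) mult_left_mono[OF X, of "4 * \<gamma> + 2"] \<gamma> by (simp add: algebra_simps)
  moreover have "ln (real Q) \<le> real Q - 1" using Q(4) by (intro ln_le_minus_one) auto
  ultimately have "ln (real (primorial Q)) \<le> (3 * b + 4 * \<gamma> + 2) * X"
    using Q(2) T(2) by (simp add: algebra_simps)
  with Q(1) Q_le that show ?thesis by blast
qed

lemma ln_ge_half:
  assumes "N \<ge> 2"
  shows "1 / 2 \<le> ln (real N)"
proof -
  have "ln 2 \<le> ln (real N)" using assms by (intro ln_mono) auto
  thus ?thesis using ln2_ge_two_thirds by linarith
qed

section \<open>Counting monomials\<close>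

lemma card_funs_const_outside:
  assumes "finite A" "finite B"
  shows "card {f. \<forall>x. (x \<in> A \<longrightarrow> f x \<in> B) \<and> (x \<notin> A \<longrightarrow> f x = z)} = card B ^ card A"
proof -
  let ?F = "{f. \<forall>x. (x \<in> A \<longrightarrow> f x \<in> B) \<and> (x \<notin> A \<longrightarrow> f x = z)}"
  have "bij_betw (\<lambda>f. restrict f A) ?F (PiE A (\<lambda>_. B))"
  proof (rule bij_betwI[where g = "\<lambda>g x. if x \<in> A then g x else z"])
    show "(\<lambda>x. if x \<in> A then restrict f A x else z) = f" if "f \<in> ?F" for f
      using that by (auto simp: fun_eq_iff)
    show "restrict (\<lambda>x. if x \<in> A then g x else z) A = g" if "g \<in> PiE A (\<lambda>_. B)" for g
      using that by (auto simp: fun_eq_iff PiE_def extensional_def)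
  qed auto
  hence "card ?F = card (PiE A (\<lambda>_. B))" by (rule bij_betw_same_card)
  thus ?thesis using assms by (simp add: card_PiE)
qed

definition exponent_box :: "nat \<Rightarrow> nat \<Rightarrow> (nat \<Rightarrow> nat) set" where
  "exponent_box d t = {\<alpha>. \<forall>i. (i \<in> {..<d} \<longrightarrow> \<alpha> i \<in> {..t}) \<and> (i \<notin> {..<d} \<longrightarrow> \<alpha> i = 0)}"

lemma card_exponent_box: "card (exponent_box d t) = (t + 1) ^ d"
  unfolding exponent_box_def by (subst card_funs_const_outside) auto

lemma finite_exponent_box: "finite (exponent_box d t)"
  unfolding exponent_box_def by (intro finite_set_of_finite_funs) auto

lemma mono_vecs_subset_exponent_box: "mono_vecs d A \<subseteq> exponent_box d (nat \<lfloor>A\<rfloor>)"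
proof
  fix \<alpha> assume \<alpha>: "\<alpha> \<in> mono_vecs d A"
  have "\<alpha> i \<le> nat \<lfloor>A\<rfloor>" if "i < d" for i
  proof -
    have "\<alpha> i \<le> sum \<alpha> {..<d}" using that by (intro member_le_sum) auto
    moreover have "real (sum \<alpha> {..<d}) \<le> A" using \<alpha> unfolding mono_vecs_def by blast
    ultimately show ?thesis by linarith
  qed
  thus "\<alpha> \<in> exponent_box d (nat \<lfloor>A\<rfloor>)" using \<alpha> by (auto simp: exponent_box_def mono_vecs_def)
qed

lemma exponent_box_subset_mono_vecs:
  assumes "A \<ge> 0"
  shows "exponent_box d (nat \<lfloor>A\<rfloor> div d) \<subseteq> mono_vecs d A"
proof
  fix \<alpha> assume \<alpha>: "\<alpha> \<in> exponent_box d (nat \<lfloor>A\<rfloor> div d)"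
  have "sum \<alpha> {..<d} \<le> (\<Sum>i<d. nat \<lfloor>A\<rfloor> div d)"
    using \<alpha> by (intro sum_mono) (auto simp: exponent_box_def)
  also have "\<dots> \<le> nat \<lfloor>A\<rfloor>" by simp
  finally have "real (sum \<alpha> {..<d}) \<le> A" using assms by linarith
  thus "\<alpha> \<in> mono_vecs d A" using \<alpha> by (auto simp: exponent_box_def mono_vecs_def)
qed

lemma finite_mono_vecs: "finite (mono_vecs d A)"
  using finite_subset[OF mono_vecs_subset_exponent_box finite_exponent_box] .

lemma card_mono_vecs_le: "real (card (mono_vecs d A)) \<le> (max A 0 + 1) ^ d"
proof -
  have "card (mono_vecs d A) \<le> (nat \<lfloor>A\<rfloor> + 1) ^ d"
    using card_mono[OF finite_exponent_box mono_vecs_subset_exponent_box] card_exponent_box by metis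
  hence "real (card (mono_vecs d A)) \<le> real (nat \<lfloor>A\<rfloor> + 1) ^ d"
    by (metis of_nat_le_iff of_nat_power)
  also have "\<dots> \<le> (max A 0 + 1) ^ d" by (intro power_mono) linarith+
  finally show ?thesis .
qed

lemma card_mono_vecs_ge:
  assumes d: "d \<ge> 1" and A: "A \<ge> 0"
  shows "(A / real d) ^ d \<le> real (card (mono_vecs d A))"
proof -
  define t where "t = nat \<lfloor>A\<rfloor> div d"
  have "(t + 1) ^ d \<le> card (mono_vecs d A)"
    using card_mono[OF finite_mono_vecs exponent_box_subset_mono_vecs[OF A]] card_exponent_box
    unfolding t_def by metis
  hence card_ge: "real (t + 1) ^ d \<le> real (card (mono_vecs d A))"
    by (metis of_nat_le_iff of_nat_power)
  have "nat \<lfloor>A\<rfloor> = d * t + nat \<lfloor>A\<rfloor> mod d"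
    unfolding t_def by simp
  moreover have "nat \<lfloor>A\<rfloor> mod d < d" using d by simp
  ultimately have "nat \<lfloor>A\<rfloor> < d * (t + 1)" by (simp add: algebra_simps)
  hence "real (nat \<lfloor>A\<rfloor>) + 1 \<le> real d * real (t + 1)"
    by (simp flip: of_nat_mult of_nat_Suc)
  moreover have "A < real (nat \<lfloor>A\<rfloor>) + 1" using A by linarith
  ultimately have "A < real d * real (t + 1)" by linarith
  hence "A / real d \<le> real (t + 1)" using d by (simp add: divide_le_eq mult.commute)
  hence "(A / real d) ^ d \<le> real (t + 1) ^ d" using A by (intro power_mono) auto
  thus ?thesis using card_ge by linarith
qed

lemma ln_card_mono_vecs_le:
  assumes "A \<ge> 0"
  shows "ln (real (card (mono_vecs d A))) \<le> real d * A"
proof (cases "card (mono_vecs d A) = 0")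
  case False
  hence "ln (real (card (mono_vecs d A))) \<le> ln ((A + 1) ^ d)"
    using card_mono_vecs_le[of d A] assms by (intro ln_mono) auto
  also have "\<dots> = real d * ln (A + 1)" using assms by (simp add: ln_realpow)
  also have "\<dots> \<le> real d * A"
    using assms ln_le_minus_one[of "A + 1"] by (intro mult_left_mono) auto
  finally show ?thesis .
qed (use assms in simp)

section \<open>Siegel's lemma modulo primes\<close>

lemma finite_grid: "finite (grid d N)"
proof -
  have "grid d N \<subseteq> {x. \<forall>i. (i \<in> {..<d} \<longrightarrow> x i \<in> {1..int N}) \<and> (i \<notin> {..<d} \<longrightarrow> x i = 0)}"
    by (auto simp: grid_def)
  thus ?thesis by (rule finite_subset) (intro finite_set_of_finite_funs, auto)
qed

lemma mpoly_eval_cong: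
  assumes "\<And>i. [x i = y i] (mod m)"
  shows "[mpoly_eval d A c x = mpoly_eval d A c y] (mod m)"
  unfolding mpoly_eval_def by (intro cong_sum cong_mult cong_refl cong_prod cong_pow assms)

lemma mpoly_eval_diff:
  "mpoly_eval d A (\<lambda>\<alpha>. c1 \<alpha> - c2 \<alpha>) x = mpoly_eval d A c1 x - mpoly_eval d A c2 x"
  by (simp add: mpoly_eval_def sum_subtractf left_diff_distrib)

lemma abs_mpoly_eval_le:
  assumes x: "x \<in> grid d N" and N: "N \<ge> 1" and c: "\<And>\<alpha>. \<bar>c \<alpha>\<bar> \<le> H"
  shows "\<bar>mpoly_eval d A c x\<bar> \<le> real (card (mono_vecs d A)) * H * real N powr A"
proof -
  have monomial_le: "\<bar>\<Prod>i<d. real_of_int (x i) ^ \<alpha> i\<bar> \<le> real N powr A" if \<alpha>: "\<alpha> \<in> mono_vecs d A" for \<alpha>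
  proof -
    have "\<bar>\<Prod>i<d. real_of_int (x i) ^ \<alpha> i\<bar> = (\<Prod>i<d. \<bar>real_of_int (x i)\<bar> ^ \<alpha> i)"
      by (simp add: abs_prod power_abs)
    also have "\<dots> \<le> (\<Prod>i<d. real N ^ \<alpha> i)"
      using x by (intro prod_mono conjI power_mono) (auto simp: grid_def)
    also have "\<dots> = real N ^ sum \<alpha> {..<d}"
      by (simp add: power_sum)
    also have "\<dots> = real N powr real (sum \<alpha> {..<d})"
      using N by (intro powr_realpow[symmetric]) simp
    also have "\<dots> \<le> real N powr A"
      using \<alpha> N by (intro powr_mono) (auto simp: mono_vecs_def)
    finally show ?thesis .
  qed
  have "\<bar>mpoly_eval d A c x\<bar> \<le> (\<Sum>\<alpha>\<in>mono_vecs d A. \<bar>c \<alpha>\<bar> * \<bar>\<Prod>i<d. real_of_int (x i) ^ \<alpha> i\<bar>)"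
    unfolding mpoly_eval_def by (simp add: sum_abs abs_mult flip: abs_mult)
  also have "\<dots> \<le> (\<Sum>\<alpha>\<in>mono_vecs d A. H * real N powr A)"
    using c monomial_le by (intro sum_mono mult_mono) (auto intro: order_trans[OF abs_ge_zero])
  finally show ?thesis by simp
qed

lemma card_residue_tables:
  assumes "finite P" "\<And>p. p \<in> P \<Longrightarrow> finite (R p)"
  shows "card (PiE (SIGMA p:P. R p) (\<lambda>(p, y). {0..<int p})) = (\<Prod>p\<in>P. p ^ card (R p))"
proof -
  have "card (PiE (SIGMA p:P. R p) (\<lambda>(p, y). {0..<int p})) = (\<Prod>z\<in>Sigma P R. fst z)"
    using assms by (simp add: card_PiE case_prod_beta)
  also have "\<dots> = (\<Prod>p\<in>P. \<Prod>y\<in>R p. p)"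
    using assms by (subst prod.Sigma) (auto simp: case_prod_beta)
  finally show ?thesis by simp
qed

text \<open>Siegel's lemma, in its pigeonhole form: modulo \<open>p\<close>, the values of a polynomial on \<open>S\<close> only
  depend on the residues of \<open>S\<close>, so two coefficient vectors in \<open>[0, H]\<close> must have the same value
  table modulo every \<open>p \<in> P\<close>; their difference is the polynomial sought.\<close>
lemma siegel_lemma:
  assumes S: "finite S" and P: "finite P" "\<And>p. p \<in> P \<Longrightarrow> prime p"
    and more_coeffs: "(\<Prod>p\<in>P. p ^ card (reduce_mod p ` S)) < (H + 1) ^ card (mono_vecs d A)"
  obtains c where "\<forall>\<alpha>. \<alpha> \<notin> mono_vecs d A \<longrightarrow> c \<alpha> = 0" "\<forall>\<alpha>. \<bar>c \<alpha>\<bar> \<le> int H" "\<exists>\<alpha>. c \<alpha> \<noteq> 0"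
    "\<forall>x\<in>S. \<forall>p\<in>P. int p dvd mpoly_eval d A c x"
proof -
  define V where "V = mono_vecs d A"
  define ext where "ext = (\<lambda>f \<alpha>. if \<alpha> \<in> V then f \<alpha> else (0::int))"
  define Dom where "Dom = (SIGMA p:P. reduce_mod p ` S)"
  define table where "table = (\<lambda>f. restrict (\<lambda>(p, y). mpoly_eval d A (ext f) y mod int p) Dom)"
  define Coeffs where "Coeffs = PiE V (\<lambda>_. {0..int H})"
  define Tables where "Tables = PiE Dom (\<lambda>(p, y). {0..<int p})"
  have "card Tables = (\<Prod>p\<in>P. p ^ card (reduce_mod p ` S))"
    unfolding Tables_def Dom_def using S P by (intro card_residue_tables) auto
  moreover have "nat (int H + 1) = H + 1" by simp
  hence "card Coeffs = (H + 1) ^ card (mono_vecs d A)"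
    unfolding Coeffs_def V_def using finite_mono_vecs by (simp add: card_PiE)
  ultimately have "card Tables < card Coeffs"
    using more_coeffs by simp
  moreover have "table ` Coeffs \<subseteq> Tables"
    using P by (auto simp: table_def Tables_def Dom_def prime_gt_0_nat split: if_splits)
  moreover have "finite Tables"
    using S P by (auto simp: Tables_def Dom_def intro!: finite_PiE)
  ultimately have "\<not> inj_on table Coeffs"
    using card_inj_on_le[of table Coeffs Tables] by linarith
  then obtain f1 f2 where f: "f1 \<in> Coeffs" "f2 \<in> Coeffs" "f1 \<noteq> f2" "table f1 = table f2"
    unfolding inj_on_def by blast
  define c where "c = (\<lambda>\<alpha>. ext f1 \<alpha> - ext f2 \<alpha>)"
  show ?thesis
  proof
    show "\<forall>\<alpha>. \<alpha> \<notin> mono_vecs d A \<longrightarrow> c \<alpha> = 0" by (simp add: c_def ext_def V_def)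
    show "\<forall>\<alpha>. \<bar>c \<alpha>\<bar> \<le> int H"
      using f(1,2) by (force simp: c_def ext_def Coeffs_def)
    obtain \<alpha> where \<alpha>: "f1 \<alpha> \<noteq> f2 \<alpha>" using f(3) by blast
    moreover have "\<alpha> \<in> V"
      using f(1,2) \<alpha> unfolding Coeffs_def by (metis PiE_arb)
    ultimately show "\<exists>\<alpha>. c \<alpha> \<noteq> 0" by (auto simp: c_def ext_def)
    show "\<forall>x\<in>S. \<forall>p\<in>P. int p dvd mpoly_eval d A c x"
    proof (intro ballI)
      fix x p assume x: "x \<in> S" and p: "p \<in> P"
      define y where "y = reduce_mod p x"
      have x_y: "[mpoly_eval d A g x = mpoly_eval d A g y] (mod int p)" for g
        unfolding y_def by (intro mpoly_eval_cong) (simp add: reduce_mod_def Cong.cong_def)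
      have "(p, y) \<in> Dom" unfolding Dom_def y_def using x p by auto
      hence "[mpoly_eval d A (ext f1) y = mpoly_eval d A (ext f2) y] (mod int p)"
        using fun_cong[OF f(4), of "(p, y)"] by (simp add: table_def Cong.cong_def)
      hence "[mpoly_eval d A (ext f1) x = mpoly_eval d A (ext f2) x] (mod int p)"
        by (meson x_y cong_sym cong_trans)
      thus "int p dvd mpoly_eval d A c x"
        by (simp add: c_def mpoly_eval_diff cong_iff_dvd_diff)
    qed
  qed
qed

text \<open>A nonzero integer divisible by every \<open>p \<in> P\<close> is at least \<open>\<Prod>P\<close> in absolute value, and the
  value bound rules that out.\<close>
lemma exists_poly_vanishing_on:
  assumes S: "S \<subseteq> grid d N" and N: "N \<ge> 1" and P: "finite P" "\<And>p. p \<in> P \<Longrightarrow> prime p"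
    and more_coeffs: "(\<Prod>p\<in>P. p ^ card (reduce_mod p ` S)) < (H + 1) ^ card (mono_vecs d A)"
    and values_small: "real (card (mono_vecs d A)) * real H * real N powr A < real (\<Prod>P)"
    and H: "real H \<le> real N powr A"
  shows "\<exists>c. nonzero_poly_complexity d N A c \<and> (\<forall>x\<in>S. mpoly_eval d A c x = 0)"
proof -
  obtain c where c: "\<forall>\<alpha>. \<alpha> \<notin> mono_vecs d A \<longrightarrow> c \<alpha> = 0" "\<forall>\<alpha>. \<bar>c \<alpha>\<bar> \<le> int H" "\<exists>\<alpha>. c \<alpha> \<noteq> 0"
      "\<forall>x\<in>S. \<forall>p\<in>P. int p dvd mpoly_eval d A c x"
    using siegel_lemma[OF finite_subset[OF S finite_grid] P more_coeffs] by blast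
  have coeff_le: "real_of_int \<bar>c \<alpha>\<bar> \<le> real H" for \<alpha>
    using c(2) by (metis of_int_le_iff of_int_of_nat_eq)
  hence "nonzero_poly_complexity d N A c"
    unfolding nonzero_poly_complexity_def using c(1,3) H by (meson order_trans)
  moreover have "mpoly_eval d A c x = 0" if x: "x \<in> S" for x
  proof (rule ccontr)
    assume nonzero: "mpoly_eval d A c x \<noteq> 0"
    have "[mpoly_eval d A c x = 0] (mod (\<Prod>p\<in>P. int p))"
      using c(4) x P(2) primes_coprime
      by (intro cong_cong_prod_coprime) (auto simp: cong_0_iff coprime_int_iff intro!: primes_coprime)
    hence "int (\<Prod>P) dvd mpoly_eval d A c x" by (simp add: cong_0_iff)
    hence "int (\<Prod>P) \<le> \<bar>mpoly_eval d A c x\<bar>"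
      using dvd_imp_le_int[OF nonzero] by fastforce
    hence "real (\<Prod>P) \<le> \<bar>mpoly_eval d A c x\<bar>"
      by (metis of_int_le_iff of_int_of_nat_eq)
    also have "\<dots> \<le> real (card (mono_vecs d A)) * real H * real N powr A"
      using S x N coeff_le by (intro abs_mpoly_eval_le) auto
    finally show False using values_small by linarith
  qed
  ultimately show ?thesis by blast
qed

section \<open>Choice of the parameters\<close>

lemma ln_prod_residue_powers_le:
  assumes residues: "\<forall>p. prime p \<longrightarrow> real (card (reduce_mod p ` S)) \<le> K * real p powr \<kappa>"
    and "K \<ge> 0" "\<kappa> \<ge> 0"
  shows "ln (real (\<Prod>p | prime p \<and> p \<le> Q. p ^ card (reduce_mod p ` S)))
           \<le> K * real Q powr \<kappa> * ln (real (primorial Q))"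
proof -
  let ?P = "{p. prime p \<and> p \<le> Q}"
  have "ln (real (\<Prod>p\<in>?P. p ^ card (reduce_mod p ` S)))
          = (\<Sum>p\<in>?P. real (card (reduce_mod p ` S)) * ln (real p))"
    using finite_primes_le[of Q] by (simp, subst ln_prod) (auto simp: prime_gt_0_nat ln_realpow)
  also have "\<dots> \<le> (\<Sum>p\<in>?P. K * real Q powr \<kappa> * ln (real p))"
  proof (intro sum_mono mult_right_mono)
    fix p assume p: "p \<in> ?P"
    have "real (card (reduce_mod p ` S)) \<le> K * real p powr \<kappa>" using residues p by blast
    also have "\<dots> \<le> K * real Q powr \<kappa>" using p assms by (intro mult_left_mono powr_mono2) auto
    finally show "real (card (reduce_mod p ` S)) \<le> K * real Q powr \<kappa>" .
    show "0 \<le> ln (real p)" using p prime_ge_1_nat by simp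
  qed
  also have "\<dots> = K * real Q powr \<kappa> * ln (real (primorial Q))"
    by (simp add: sum_distrib_left ln_primorial)
  finally show ?thesis .
qed

lemma prod_residue_powers_less_power:
  fixes K \<kappa> g h X Y :: real
  assumes residues: "\<forall>p. prime p \<longrightarrow> real (card (reduce_mod p ` S)) \<le> K * real p powr \<kappa>"
    and K: "K > 0" and \<kappa>: "\<kappa> \<ge> 0"
    and Q: "real Q \<le> g * X" "ln (real (primorial Q)) \<le> h * X"
    and balance: "K * (g * X) powr \<kappa> * (h * X) < Y * X"
    and Y: "Y \<le> real M" and X: "0 \<le> X" "X \<le> ln (real H + 1)"
  shows "(\<Prod>p | prime p \<and> p \<le> Q. p ^ card (reduce_mod p ` S)) < (H + 1) ^ M"
proof -
  let ?X = "\<Prod>p | prime p \<and> p \<le> Q. p ^ card (reduce_mod p ` S)"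
  have "ln (real ?X) \<le> K * real Q powr \<kappa> * ln (real (primorial Q))"
    using residues K \<kappa> by (intro ln_prod_residue_powers_le) auto
  also have "\<dots> \<le> K * (g * X) powr \<kappa> * (h * X)"
    using Q K \<kappa> primorial_pos[of Q] by (intro mult_mono mult_left_mono powr_mono2) auto
  also have "\<dots> < Y * X" by (rule balance)
  also have "\<dots> \<le> real M * ln (real H + 1)" using Y X by (intro mult_mono) auto
  also have "\<dots> = ln (real ((H + 1) ^ M))" by (simp add: ln_realpow)
  finally have "real ?X < real ((H + 1) ^ M)"
    using finite_primes_le[of Q]
    by (subst (asm) ln_less_cancel_iff) (auto simp: prime_gt_0_nat intro!: prod_pos)
  thus ?thesis by (simp only: of_nat_less_iff)
qed

lemma floor_powr_bounds:
  fixes A :: real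
  assumes N: "N \<ge> 2" and A: "A \<ge> 1"
  defines "H \<equiv> nat \<lfloor>real N powr A\<rfloor>"
  shows "1 \<le> H" "real H \<le> real N powr A" "ln (real H) \<le> A * ln (real N)"
    "A * ln (real N) \<le> ln (real H + 1)"
proof -
  have "real N powr 1 \<le> real N powr A" using N A by (intro powr_mono) auto
  hence NA: "2 \<le> real N powr A" using N by simp
  thus H: "1 \<le> H" "real H \<le> real N powr A" unfolding H_def by linarith+
  have "ln (real H) \<le> ln (real N powr A)" using H by (intro ln_mono) auto
  thus "ln (real H) \<le> A * ln (real N)" using N by (simp add: ln_powr)
  have "real N powr A \<le> real H + 1" unfolding H_def using NA by linarith
  hence "ln (real N powr A) \<le> ln (real H + 1)" using NA N by (intro ln_mono) auto
  thus "A * ln (real N) \<le> ln (real H + 1)" using N by (simp add: ln_powr)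
qed

text \<open>The primes up to \<open>Q\<close> are chosen so that their product just exceeds the a priori bound for
  the values of the polynomial on \<open>S\<close>; the balance hypothesis then says there are more coefficient
  vectors than residue tables.\<close>
lemma exists_vanishing_poly_of_complexity:
  fixes A \<gamma> :: real
  assumes d: "d \<ge> 1" and \<kappa>: "\<kappa> \<ge> 0" and K: "K > 0"
    and cheb: "\<And>q. real q / 2 - \<gamma> \<le> ln (real (primorial q))" and \<gamma>: "\<gamma> \<ge> 0"
    and N: "N \<ge> 2" and S: "S \<subseteq> grid d N"
    and residues: "\<forall>p. prime p \<longrightarrow> real (card (reduce_mod p ` S)) \<le> K * real p powr \<kappa>"
    and A: "A \<ge> 1"
    and balance: "K * ((4 * real d + 4 * \<gamma> + 10) * A * ln (real N)) powr \<kappa>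
                    * ((6 * real d + 4 * \<gamma> + 14) * A * ln (real N))
                  < (A / real d) ^ d * (A * ln (real N))"
  shows "\<exists>c. nonzero_poly_complexity d N A c \<and> (\<forall>x\<in>S. mpoly_eval d A c x = 0)"
proof -
  define L where "L = ln (real N)"
  define M where "M = card (mono_vecs d A)"
  define H where "H = nat \<lfloor>real N powr A\<rfloor>"
  note H = floor_powr_bounds[OF N A, folded H_def L_def]
  have L: "1 / 2 \<le> L" unfolding L_def using ln_ge_half[OF N] .
  have "1 * (1 / 2) \<le> A * L" using A L by (intro mult_mono) auto
  hence AL: "1 / 2 \<le> A * L" by simp
  have "A * 1 \<le> A * (2 * L)" using A L by (intro mult_left_mono) auto
  hence "real d * A \<le> 2 * real d * (A * L)"
    using mult_left_mono[of A "A * (2 * L)" "real d"] by (simp add: algebra_simps)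
  hence M: "(A / real d) ^ d \<le> real M" "ln (real M) \<le> 2 * real d * (A * L)"
    using card_mono_vecs_ge[OF d, of A] ln_card_mono_vecs_le[of A d] A unfolding M_def by auto
  have "0 < (A / real d) ^ d" using A d by simp
  hence M_pos: "0 < real M" using M(1) by linarith
  hence "0 \<le> ln (real M)" by simp
  define T where "T = 2 * (A * L) + ln (real M) + 1"
  have T: "0 < T" "T \<le> (2 * real d + 4) * (A * L)"
    using M(2) \<open>0 \<le> ln (real M)\<close> AL unfolding T_def by (simp_all add: algebra_simps)
  obtain Q where Q: "T \<le> ln (real (primorial Q))"
      "real Q \<le> (2 * (2 * real d + 4) + 4 * \<gamma> + 2) * (A * L)"
      "ln (real (primorial Q)) \<le> (3 * (2 * real d + 4) + 4 * \<gamma> + 2) * (A * L)"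
    by (rule primorial_threshold_linear[OF cheb \<gamma> T AL])
  have Q_le: "real Q \<le> (4 * real d + 4 * \<gamma> + 10) * (A * L)"
    using Q(2) by (simp add: algebra_simps)
  have theta_le: "ln (real (primorial Q)) \<le> (6 * real d + 4 * \<gamma> + 14) * (A * L)"
    using Q(3) by (simp add: algebra_simps)
  define P where "P = {p. prime p \<and> p \<le> Q}"
  show ?thesis
  proof (rule exists_poly_vanishing_on[OF S _ _ _ _ _ H(2), folded M_def])
    show "finite P" "\<And>p. p \<in> P \<Longrightarrow> prime p" "1 \<le> N"
      using N finite_primes_le by (auto simp: P_def)
    have pos: "0 < real M * real H * real N powr A" using M_pos H(1) N by simp
    have "ln (real M * real H * real N powr A) = ln (real M) + ln (real H) + A * L"
      using M_pos H(1) N by (simp add: ln_mult ln_powr L_def)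
    also have "\<dots> < ln (real (primorial Q))"
      using H(3) Q(1) unfolding T_def by linarith
    finally show "real M * real H * real N powr A < real (\<Prod>P)"
      using pos primorial_pos[of Q] by (simp add: P_def flip: primorial_def)
  next
    have "K * ((4 * real d + 4 * \<gamma> + 10) * (A * L)) powr \<kappa> * ((6 * real d + 4 * \<gamma> + 14) * (A * L))
            < (A / real d) ^ d * (A * L)"
      using balance by (simp add: L_def mult.assoc)
    thus "(\<Prod>p\<in>P. p ^ card (reduce_mod p ` S)) < (H + 1) ^ M"
      unfolding P_def using AL
      by (intro prod_residue_powers_less_power[OF residues K \<kappa> Q_le theta_le _ M(1) _ H(4)]) auto
  qed
qed

text \<open>The exponent \<open>\<kappa> / (d - \<kappa>)\<close> is what makes \<open>A\<^sup>d\<^sup>-\<^sup>\<kappa> \<ge> C\<^sup>d\<^sup>-\<^sup>\<kappa> L\<^sup>\<kappa>\<close>, so that the \<open>(A / d)\<^sup>d\<close>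
  coefficients outnumber the \<open>K (g A L)\<^sup>\<kappa>\<close> residue classes.\<close>
lemma log_power_balance:
  fixes \<kappa> K g B L C A :: real
  assumes K: "K > 0" and \<kappa>: "0 \<le> \<kappa>" "\<kappa> < real d" and g: "g > 0" and B: "B > 0" and L: "L > 0"
    and C: "(K * g powr \<kappa> * B * real d ^ d + 1) powr (1 / (real d - \<kappa>)) \<le> C"
    and A: "A = C * L powr (\<kappa> / (real d - \<kappa>))"
  shows "K * (g * A * L) powr \<kappa> * (B * A * L) < (A / real d) ^ d * (A * L)"
proof -
  define K' where "K' = K * g powr \<kappa> * B * real d ^ d"
  have d: "real d > 0" using \<kappa> by linarith
  have K': "K' > 0" using K g B d by (simp add: K'_def)
  have dk: "real d - \<kappa> > 0" using \<kappa> by simp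
  have C_pos: "C > 0" using C K' by (smt (verit, best) K'_def powr_gt_zero)
  have A_pos: "A > 0" using C_pos L by (simp add: A)
  have "K' + 1 = ((K' + 1) powr (1 / (real d - \<kappa>))) powr (real d - \<kappa>)"
    using K' dk by (simp add: powr_powr)
  also have "\<dots> \<le> C powr (real d - \<kappa>)"
    using C K' dk by (intro powr_mono2) (auto simp: K'_def)
  finally have "(K' + 1) * L powr \<kappa> \<le> C powr (real d - \<kappa>) * L powr \<kappa>"
    using L by (intro mult_right_mono) auto
  also have "\<dots> = A powr (real d - \<kappa>)"
    using C_pos L dk by (simp add: A powr_mult powr_powr)
  finally have "(K' + 1) * L powr \<kappa> * A powr \<kappa> \<le> A powr (real d - \<kappa>) * A powr \<kappa>"
    using A_pos by (intro mult_right_mono) auto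
  also have "\<dots> = A ^ d" using A_pos by (simp add: powr_add[symmetric] powr_realpow)
  finally have A_pow: "(K' + 1) * (L powr \<kappa> * A powr \<kappa>) \<le> A ^ d" by (simp add: mult.assoc)
  have "K * (g * A * L) powr \<kappa> * B = K' * (L powr \<kappa> * A powr \<kappa>) / real d ^ d"
    using g A_pos L d by (simp add: K'_def powr_mult)
  also have "\<dots> < (K' + 1) * (L powr \<kappa> * A powr \<kappa>) / real d ^ d"
    using A_pos L d by (intro divide_strict_right_mono mult_strict_right_mono) auto
  also have "\<dots> \<le> (A / real d) ^ d"
    using A_pow d by (simp add: power_divide divide_right_mono)
  finally show ?thesis
    using A_pos L mult_strict_right_mono[of _ _ "A * L"] by (simp add: mult.assoc)
qed

lemma exists_vanishing_poly_log_power: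
  fixes \<gamma> C :: real
  assumes d: "d \<ge> 1" and \<kappa>: "0 \<le> \<kappa>" "\<kappa> < real d" and K: "K > 0"
    and cheb: "\<And>q. real q / 2 - \<gamma> \<le> ln (real (primorial q))" and \<gamma>: "\<gamma> \<ge> 0"
    and C: "2 powr (\<kappa> / (real d - \<kappa>)) \<le> C"
      "(K * (4 * real d + 4 * \<gamma> + 10) powr \<kappa> * (6 * real d + 4 * \<gamma> + 14) * real d ^ d + 1)
         powr (1 / (real d - \<kappa>)) \<le> C"
    and N: "N \<ge> 2" and S: "S \<subseteq> grid d N"
    and residues: "\<forall>p. prime p \<longrightarrow> real (card (reduce_mod p ` S)) \<le> K * real p powr \<kappa>"
  defines "A \<equiv> C * ln (real N) powr (\<kappa> / (real d - \<kappa>))"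
  shows "\<exists>c. nonzero_poly_complexity d N A c \<and> (\<forall>x\<in>S. mpoly_eval d A c x = 0)"
proof (rule exists_vanishing_poly_of_complexity[OF d \<kappa>(1) K cheb \<gamma> N S residues])
  define L where "L = ln (real N)"
  define e where "e = \<kappa> / (real d - \<kappa>)"
  have L: "1 / 2 \<le> L" unfolding L_def using ln_ge_half[OF N] .
  have "e \<ge> 0" using \<kappa> by (simp add: e_def)
  have "0 \<le> C" using C(1) by (meson order_trans powr_ge_zero)
  hence "1 = 2 powr e * (1 / 2) powr e" by (simp add: powr_mult[symmetric])
  also have "\<dots> \<le> C * L powr e"
    using C(1) L \<open>e \<ge> 0\<close> \<open>0 \<le> C\<close> by (intro mult_mono powr_mono2) (auto simp: e_def)
  finally show "1 \<le> A" by (simp add: A_def L_def e_def)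
  show "K * ((4 * real d + 4 * \<gamma> + 10) * A * ln (real N)) powr \<kappa>
          * ((6 * real d + 4 * \<gamma> + 14) * A * ln (real N)) < (A / real d) ^ d * (A * ln (real N))"
    using K \<kappa> \<gamma> L C(2) by (intro log_power_balance) (auto simp: A_def L_def)
qed

theorem theorem1p2:
  fixes d :: nat and \<kappa> K \<epsilon> :: real
  assumes "d \<ge> 1" and "0 \<le> \<kappa>" and "\<kappa> < real d" and "K > 0" and "\<epsilon> > 0"
  shows "\<exists>C > 0. \<forall>(N::nat) (S :: (nat \<Rightarrow> int) set).
           N \<ge> 2 \<and> S \<subseteq> grid d N \<and>
           (\<forall>p::nat. prime p \<longrightarrow> real (card (reduce_mod p ` S)) \<le> K * real p powr \<kappa>)
           \<longrightarrow> (\<exists>c. nonzero_poly_complexity d N (C * ln (real N) powr (\<kappa> / (real d - \<kappa>))) c \<and>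
                   real (card {x\<in>S. mpoly_eval d (C * ln (real N) powr (\<kappa> / (real d - \<kappa>))) c x = 0})
                     \<ge> (1 - \<epsilon>) * real (card S))"
proof -
  obtain \<gamma> where \<gamma>: "\<gamma> \<ge> 0" "\<forall>q. real q / 2 - \<gamma> \<le> ln (real (primorial q))"
    using ln_primorial_ge_linear by blast
  define C where "C = max (2 powr (\<kappa> / (real d - \<kappa>)))
    ((K * (4 * real d + 4 * \<gamma> + 10) powr \<kappa> * (6 * real d + 4 * \<gamma> + 14) * real d ^ d + 1)
       powr (1 / (real d - \<kappa>)))"
  have "C > 0" by (simp add: C_def less_max_iff_disj)
  moreover have "\<exists>c. nonzero_poly_complexity d N (C * ln (real N) powr (\<kappa> / (real d - \<kappa>))) c \<and>
      real (card {x\<in>S. mpoly_eval d (C * ln (real N) powr (\<kappa> / (real d - \<kappa>))) c x = 0})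
        \<ge> (1 - \<epsilon>) * real (card S)"
    if NS: "N \<ge> 2" "S \<subseteq> grid d N"
      "\<forall>p::nat. prime p \<longrightarrow> real (card (reduce_mod p ` S)) \<le> K * real p powr \<kappa>" for N S
  proof -
    let ?A = "C * ln (real N) powr (\<kappa> / (real d - \<kappa>))"
    obtain c where c: "nonzero_poly_complexity d N ?A c" "\<forall>x\<in>S. mpoly_eval d ?A c x = 0"
      using exists_vanishing_poly_log_power[OF assms(1-4) _ \<gamma>(1) max.cobounded1 max.cobounded2 NS]
        \<gamma>(2) unfolding C_def by blast
    from c(2) have "{x\<in>S. mpoly_eval d ?A c x = 0} = S" by blast
    moreover have "(1 - \<epsilon>) * real (card S) \<le> 1 * real (card S)"
      using assms(5) by (intro mult_right_mono) auto
    ultimately show ?thesis using c(1) by auto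
  qed
  ultimately show ?thesis by blast
qed

end
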